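(* In the setting below, for $K$ sufficiently large and $L=L(K)$ as below, there is $K'>K$ such that for all $X,Z\in{\bf Y}$, $x\in\mathcal C(X)$, $z\in\mathcal C(Z)$, $$d_{\mathcal C({\bf Y})}(x,z)\ge\frac12\sum_{W\in{\bf Y}_{K'}(x,z)}d_W(x,z).$$
   Context: Let ${\bf Y}$ be a set, $\xi>0$, and for each $Y\in{\bf Y}$ let $\mathcal C(Y)$ be a geodesic metric space and $\pi_Y$ a map from ${\bf Y}\setminus\{Y\}$ to subsets of $\mathcal C(Y)$ with $\mathrm{diam}\,\pi_Y(X)<\xi$. Set $d^\pi_Y(X,Z)=\mathrm{diam}(\pi_Y(X)\cup\pi_Y(Z))$ and assume: for pairwise distinct $X,Y,Z$, $\min\{d^\pi_Y(X,Z),d^\pi_Z(X,Y)\}<\xi$; and $\{Y:d^\pi_Y(X,Z)\ge\xi\}$ is finite for all $X,Z$. For $x\in\mathcal C(X)$, $X\ne Y$, put $\pi_Y(x)=\pi_Y(X)$; for $y\in\mathcal C(Y)$, $\pi_Y(y)=\{y\}$; $d^\pi_Y(x,z)=\mathrm{diam}(\pi_Y(x)\cup\pi_Y(z))$. $\mathcal H(X,Z)$: pairs $(X',Z')$ with either $d^\pi_X(X',Z')>2\xi$ and $d^\pi_Z(X',Z')>2\xi$; or $X'=X$ and $d^\pi_Z(X,Z')>2\xi$; or $Z'=Z$ and $d^\pi_X(X',Z)>2\xi$; or $(X',Z')=(X,Z)$. $d_Y(X,Z)=\inf_{\mathcal H(X,Z)}d^\pi_Y(X',Z')$. For points $x\in\mathcal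 C(X)$, $z\in\mathcal C(Z)$: if $X,Z\ne Y$ then $d_Y(x,z)=d_Y(X,Z)$, and if $x\in\mathcal C(Y)$ or $z\in\mathcal C(Y)$ then $d_Y(x,z)=d^\pi_Y(x,z)$. ${\bf Y}_K(X,Z)=\{Y\ne X,Z:d_Y(X,Z)>K\}$ and ${\bf Y}_K(x,z)=\{Y: d_Y(x,z)>K\}$. $\mathcal P_K({\bf Y})$: graph on ${\bf Y}$, distinct $X,Z$ adjacent iff ${\bf Y}_K(X,Z)=\emptyset$. $\mathcal C({\bf Y})$: path metric space obtained from $\bigsqcup_Y\mathcal C(Y)$ by attaching, for each edge $X,Z$ of $\mathcal P_K({\bf Y})$, an edge of length $L$ from every point of $\pi_X(Z)$ to every point of $\pi_Z(X)$, where $L=L(K)$ has $|L-K|$ bounded by a constant depending only on $\xi$ and is large enough that $d_{\mathcal C({\bf Y})}(x,z)\ge d^\pi_Y(x,z)$ for all $Y,x,z$. *)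

theory Defs
  imports "HOL-Analysis.Analysis"
begin

(* The index set \<^bold>Y is the type 'y.  The spaces C(Y) are the carriers
   S Y :: 'a set with metrics d Y.  A point of the disjoint union of the C(Y) is a pair
   (Y, a) with a \<in> S Y.  The projections are \<pi> Y X \<subseteq> S Y (X \<noteq> Y). *)

definition geodesic_space :: "'a set \<Rightarrow> ('a \<Rightarrow> 'a \<Rightarrow> real) \<Rightarrow> bool" where
  "geodesic_space M d \<longleftrightarrow> Metric_space M d \<and>
     (\<forall>a\<in>M. \<forall>b\<in>M. \<exists>\<gamma>::real \<Rightarrow> 'a. \<gamma> 0 = a \<and> \<gamma> (d a b) = b \<and>
        (\<forall>s\<in>{0..d a b}. \<gamma> s \<in> M) \<and>
        (\<forall>s\<in>{0..d a b}. \<forall>t\<in>{0..d a b}. d (\<gamma> s) (\<gamma> t) = \<bar>s - t\<bar>))"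

(* diameter, extended-real valued (so that unbounded sets have diameter \<infinity>) *)
definition ediam :: "('a \<Rightarrow> 'a \<Rightarrow> real) \<Rightarrow> 'a set \<Rightarrow> ereal" where
  "ediam d A = (SUP p\<in>A \<times> A. ereal (d (fst p) (snd p)))"

(* real-valued diameter (used only for bounded nonempty sets) *)
definition diam :: "('a \<Rightarrow> 'a \<Rightarrow> real) \<Rightarrow> 'a set \<Rightarrow> real" where
  "diam d A = real_of_ereal (ediam d A)"

definition dpi :: "('y \<Rightarrow> 'a \<Rightarrow> 'a \<Rightarrow> real) \<Rightarrow> ('y \<Rightarrow> 'y \<Rightarrow> 'a set) \<Rightarrow> 'y \<Rightarrow> 'y \<Rightarrow> 'y \<Rightarrow> real" where
  "dpi d \<pi> Y X Z = diam (d Y) (\<pi> Y X \<union> \<pi> Y Z)"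

definition proj_system :: "('y \<Rightarrow> 'a set) \<Rightarrow> ('y \<Rightarrow> 'a \<Rightarrow> 'a \<Rightarrow> real) \<Rightarrow> ('y \<Rightarrow> 'y \<Rightarrow> 'a set) \<Rightarrow> real \<Rightarrow> bool" where
  "proj_system S d \<pi> \<xi> \<longleftrightarrow> \<xi> > 0 \<and>
     (\<forall>Y. geodesic_space (S Y) (d Y)) \<and>
     (\<forall>X Y. X \<noteq> Y \<longrightarrow> \<pi> Y X \<subseteq> S Y \<and> \<pi> Y X \<noteq> {} \<and> ediam (d Y) (\<pi> Y X) < ereal \<xi>) \<and>
     (\<forall>X Y Z. X \<noteq> Y \<and> Y \<noteq> Z \<and> X \<noteq> Z \<longrightarrow> min (dpi d \<pi> Y X Z) (dpi d \<pi> Z X Y) < \<xi>) \<and>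
     (\<forall>X Z. finite {Y. Y \<noteq> X \<and> Y \<noteq> Z \<and> dpi d \<pi> Y X Z \<ge> \<xi>})"

(* the set \<H>(X,Z) (with the implicit requirement that all projections used are defined) *)
definition Hset :: "('y \<Rightarrow> 'a \<Rightarrow> 'a \<Rightarrow> real) \<Rightarrow> ('y \<Rightarrow> 'y \<Rightarrow> 'a set) \<Rightarrow> real \<Rightarrow> 'y \<Rightarrow> 'y \<Rightarrow> ('y \<times> 'y) set" where
  "Hset d \<pi> \<xi> X Z = {(X', Z').
      (X' \<noteq> X \<and> Z' \<noteq> X \<and> X' \<noteq> Z \<and> Z' \<noteq> Z \<and>
         dpi d \<pi> X X' Z' > 2 * \<xi> \<and> dpi d \<pi> Z X' Z' > 2 * \<xi>)
    \<or> (X' = X \<and> X \<noteq> Z \<and> Z' \<noteq> Z \<and> dpi d \<pi> Z X Z' > 2 * \<xi>)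
    \<or> (Z' = Z \<and> X' \<noteq> X \<and> X \<noteq> Z \<and> dpi d \<pi> X X' Z > 2 * \<xi>)
    \<or> (X', Z') = (X, Z)}"

definition dY :: "('y \<Rightarrow> 'a \<Rightarrow> 'a \<Rightarrow> real) \<Rightarrow> ('y \<Rightarrow> 'y \<Rightarrow> 'a set) \<Rightarrow> real \<Rightarrow> 'y \<Rightarrow> 'y \<Rightarrow> 'y \<Rightarrow> real" where
  "dY d \<pi> \<xi> Y X Z = Inf {dpi d \<pi> Y X' Z' | X' Z'. (X', Z') \<in> Hset d \<pi> \<xi> X Z \<and> X' \<noteq> Y \<and> Z' \<noteq> Y}"

definition ppi :: "('y \<Rightarrow> 'y \<Rightarrow> 'a set) \<Rightarrow> 'y \<Rightarrow> 'y \<times> 'a \<Rightarrow> 'a set" where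
  "ppi \<pi> Y p = (if fst p = Y then {snd p} else \<pi> Y (fst p))"

definition dpi_pt :: "('y \<Rightarrow> 'a \<Rightarrow> 'a \<Rightarrow> real) \<Rightarrow> ('y \<Rightarrow> 'y \<Rightarrow> 'a set) \<Rightarrow> 'y \<Rightarrow> 'y \<times> 'a \<Rightarrow> 'y \<times> 'a \<Rightarrow> real" where
  "dpi_pt d \<pi> Y p q = diam (d Y) (ppi \<pi> Y p \<union> ppi \<pi> Y q)"

definition dY_pt :: "('y \<Rightarrow> 'a \<Rightarrow> 'a \<Rightarrow> real) \<Rightarrow> ('y \<Rightarrow> 'y \<Rightarrow> 'a set) \<Rightarrow> real \<Rightarrow> 'y \<Rightarrow> 'y \<times> 'a \<Rightarrow> 'y \<times> 'a \<Rightarrow> real" where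
  "dY_pt d \<pi> \<xi> Y p q =
     (if fst p \<noteq> Y \<and> fst q \<noteq> Y then dY d \<pi> \<xi> Y (fst p) (fst q) else dpi_pt d \<pi> Y p q)"

definition YK :: "('y \<Rightarrow> 'a \<Rightarrow> 'a \<Rightarrow> real) \<Rightarrow> ('y \<Rightarrow> 'y \<Rightarrow> 'a set) \<Rightarrow> real \<Rightarrow> real \<Rightarrow> 'y \<Rightarrow> 'y \<Rightarrow> 'y set" where
  "YK d \<pi> \<xi> K X Z = {Y. Y \<noteq> X \<and> Y \<noteq> Z \<and> dY d \<pi> \<xi> Y X Z > K}"

definition YK_pt :: "('y \<Rightarrow> 'a \<Rightarrow> 'a \<Rightarrow> real) \<Rightarrow> ('y \<Rightarrow> 'y \<Rightarrow> 'a set) \<Rightarrow> real \<Rightarrow> real \<Rightarrow> 'y \<times> 'a \<Rightarrow> 'y \<times> 'a \<Rightarrow> 'y set" where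
  "YK_pt d \<pi> \<xi> K p q = {Y. dY_pt d \<pi> \<xi> Y p q > K}"

definition PK_adj :: "('y \<Rightarrow> 'a \<Rightarrow> 'a \<Rightarrow> real) \<Rightarrow> ('y \<Rightarrow> 'y \<Rightarrow> 'a set) \<Rightarrow> real \<Rightarrow> real \<Rightarrow> 'y \<Rightarrow> 'y \<Rightarrow> bool" where
  "PK_adj d \<pi> \<xi> K X Z \<longleftrightarrow> X \<noteq> Z \<and> YK d \<pi> \<xi> K X Z = {}"

(* an elementary step of cost c between points of \<Squnion>_Y C(Y) in \<C>(\<^bold>Y):
   either inside one C(Y), or along an attached edge of length L *)
definition gstep :: "('y \<Rightarrow> 'a set) \<Rightarrow> ('y \<Rightarrow> 'a \<Rightarrow> 'a \<Rightarrow> real) \<Rightarrow> ('y \<Rightarrow> 'y \<Rightarrow> 'a set) \<Rightarrow> real \<Rightarrow> real \<Rightarrow> real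
     \<Rightarrow> 'y \<times> 'a \<Rightarrow> 'y \<times> 'a \<Rightarrow> real \<Rightarrow> bool" where
  "gstep S d \<pi> \<xi> K L p q c \<longleftrightarrow>
     (fst p = fst q \<and> snd p \<in> S (fst p) \<and> snd q \<in> S (fst q) \<and> c = d (fst p) (snd p) (snd q))
   \<or> (PK_adj d \<pi> \<xi> K (fst p) (fst q) \<and> snd p \<in> \<pi> (fst p) (fst q) \<and> snd q \<in> \<pi> (fst q) (fst p) \<and> c = L)"

(* path metric of \<C>(\<^bold>Y) between points of \<Squnion>_Y C(Y): infimum of lengths of chains
   (\<infinity> if there is no chain) *)
definition glued_dist :: "('y \<Rightarrow> 'a set) \<Rightarrow> ('y \<Rightarrow> 'a \<Rightarrow> 'a \<Rightarrow> real) \<Rightarrow> ('y \<Rightarrow> 'y \<Rightarrow> 'a set) \<Rightarrow> real \<Rightarrow> real \<Rightarrow> real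
     \<Rightarrow> 'y \<times> 'a \<Rightarrow> 'y \<times> 'a \<Rightarrow> ereal" where
  "glued_dist S d \<pi> \<xi> K L p q = Inf {ereal (sum_list cs) | ps cs.
      ps \<noteq> [] \<and> hd ps = p \<and> last ps = q \<and> length cs = length ps - 1 \<and>
      (\<forall>i < length cs. gstep S d \<pi> \<xi> K L (ps ! i) (ps ! Suc i) (cs ! i))}"

definition points :: "('y \<Rightarrow> 'a set) \<Rightarrow> ('y \<times> 'a) set" where
  "points S = {p. snd p \<in> S (fst p)}"

end

theory Submission
  imports Defs
begin

text \<open>
  Take a chain of steps in \<open>\<C>(\<^bold>Y)\<close> from \<open>x\<close> to \<open>z\<close>. By the choice of \<open>L\<close>, every step moves every
  projection \<open>d\<^sup>\<pi>\<^sub>W\<close> by at most its length, and a step leaving a space is an edge of length \<open>L\<close>.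
  For \<open>W\<close> with \<open>d\<^sub>W(x,z) > K'\<close>, consider the stretch of the chain that, seen from \<open>W\<close>, is
  farther than \<open>R = |L| + 4\<xi>\<close> from both \<open>x\<close> and \<open>z\<close>; by the triangle inequality its length is at
  least \<open>d\<^sub>W(x,z) - 2R \<ge> d\<^sub>W(x,z)/2\<close>. By the Behrstock inequality two such \<open>W \<noteq> W'\<close> are ordered
  between \<open>x\<close> and \<open>z\<close>, so a step lying in both stretches would jump across both of them and move
  the projections to \<open>W\<close> and \<open>W'\<close> by more than \<open>|L| + 2\<xi>\<close>: impossible both for an edge and
  for a step inside one space, which moves the projection to every other space by less than \<open>\<xi>\<close>.
  The stretches are therefore disjoint, and summing gives the bound.
\<close>

lemma ereal_le_ediam: "a \<in> A \<Longrightarrow> b \<in> A \<Longrightarrow> ereal (d a b) \<le> ediam d A"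
  unfolding ediam_def by (rule SUP_upper2[where i="(a, b)"]) auto

lemma ediam_le: "(\<And>a b. a \<in> A \<Longrightarrow> b \<in> A \<Longrightarrow> d a b \<le> r) \<Longrightarrow> ediam d A \<le> ereal r"
  unfolding ediam_def by (rule SUP_least) auto

lemma diam_nonneg:
  assumes "\<And>a b. 0 \<le> d a b"
  shows "0 \<le> diam d A"
proof (cases "A = {}")
  case True
  then show ?thesis unfolding diam_def ediam_def by (simp add: bot_ereal_def)
next
  case False
  then obtain a where "a \<in> A" by auto
  then have "ereal 0 \<le> ediam d A"
    using ereal_le_ediam[of a A a d] assms[of a a] by (metis ereal_less_eq(3) order_trans)
  then show ?thesis unfolding diam_def by (cases "ediam d A") auto
qed

lemma dist_le_diam:
  assumes "\<forall>u\<in>A. \<forall>v\<in>A. d u v \<le> r" "a \<in> A" "b \<in> A"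
  shows "d a b \<le> diam d A"
proof -
  have "ereal (d a b) \<le> ediam d A" "ediam d A \<le> ereal r"
    using ereal_le_ediam ediam_le assms by metis+
  then show ?thesis unfolding diam_def by (cases "ediam d A") auto
qed

lemma diam_le:
  assumes "\<forall>u\<in>A. \<forall>v\<in>A. d u v \<le> r" "a \<in> A"
  shows "diam d A \<le> r"
proof -
  have "ereal (d a a) \<le> ediam d A" "ediam d A \<le> ereal r"
    using ereal_le_ediam ediam_le assms by metis+
  then show ?thesis unfolding diam_def by (cases "ediam d A") auto
qed

lemma diam_less:
  assumes "ediam d A < ereal r" "a \<in> A"
  shows "diam d A < r"
proof -
  have "ereal (d a a) \<le> ediam d A" using ereal_le_ediam assms(2) by metis
  then show ?thesis using assms(1) unfolding diam_def by (cases "ediam d A") auto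
qed

lemma sum_disjoint_family_le:
  fixes f :: "'b \<Rightarrow> 'c::ordered_comm_monoid_add"
  assumes "finite I" "finite U" "\<And>i. i \<in> I \<Longrightarrow> A i \<subseteq> U" "disjoint_family_on A I"
    and "\<And>u. u \<in> U \<Longrightarrow> 0 \<le> f u"
  shows "(\<Sum>i\<in>I. sum f (A i)) \<le> sum f U"
proof -
  have "(\<Sum>i\<in>I. sum f (A i)) = sum f (\<Union>(A ` I))"
    using assms by (intro sum.UNION_disjoint[symmetric]) (auto intro: finite_subset simp: disjoint_family_on_def)
  also have "\<dots> \<le> sum f U" using assms by (intro sum_mono2) auto
  finally show ?thesis .
qed

lemma (in Metric_space) dist_Un_bounded:
  assumes "A \<subseteq> M" "B \<subseteq> M" "a \<in> A" "b \<in> B"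
    and A: "\<forall>u\<in>A. \<forall>v\<in>A. d u v \<le> r" and B: "\<forall>u\<in>B. \<forall>v\<in>B. d u v \<le> r"
  shows "\<forall>u\<in>A \<union> B. \<forall>v\<in>A \<union> B. d u v \<le> 2 * r + d a b"
proof -
  have "0 \<le> r" using A \<open>a \<in> A\<close> nonneg[of a a] by (meson order.trans)
  have across: "d u v \<le> 2 * r + d a b" if "u \<in> A" "v \<in> B" for u v
  proof -
    have "u \<in> M" "v \<in> M" "a \<in> M" "b \<in> M" using assms that by auto
    then have "d u v \<le> d u a + d a b + d b v" using triangle[of u a v] triangle[of a b v] by linarith
    moreover have "d u a \<le> r" "d b v \<le> r" using A B assms that by auto
    ultimately show ?thesis by linarith
  qed
  have "d u v \<le> 2 * r + d a b" if "u \<in> A \<union> B" "v \<in> A \<union> B" for u v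
    using that
  proof (elim UnE)
    assume "u \<in> A" "v \<in> A"
    then have "d u v \<le> r" using A by blast
    then show ?thesis using \<open>0 \<le> r\<close> nonneg[of a b] by linarith
  next
    assume "u \<in> B" "v \<in> B"
    then have "d u v \<le> r" using B by blast
    then show ?thesis using \<open>0 \<le> r\<close> nonneg[of a b] by linarith
  qed (metis across commute)+
  then show ?thesis by blast
qed

locale projection_system =
  fixes S :: "'y \<Rightarrow> 'a set" and d :: "'y \<Rightarrow> 'a \<Rightarrow> 'a \<Rightarrow> real"
    and \<pi> :: "'y \<Rightarrow> 'y \<Rightarrow> 'a set" and \<xi> :: real
  assumes proj_system: "proj_system S d \<pi> \<xi>"
begin

abbreviation \<delta> :: "'y \<Rightarrow> 'y \<times> 'a \<Rightarrow> 'y \<times> 'a \<Rightarrow> real" where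
  "\<delta> \<equiv> dpi_pt d \<pi>"

lemma xi_pos: "0 < \<xi>"
  using proj_system unfolding proj_system_def by auto

lemma metric_space: "Metric_space (S Y) (d Y)"
  using proj_system unfolding proj_system_def geodesic_space_def by auto

lemma d_nonneg: "0 \<le> d Y a b"
  using metric_space Metric_space.nonneg by metis

lemma d_self: "a \<in> S Y \<Longrightarrow> d Y a a = 0"
  using metric_space Metric_space.zero by metis

lemma projection_props: "X \<noteq> Y \<Longrightarrow> \<pi> Y X \<subseteq> S Y \<and> \<pi> Y X \<noteq> {} \<and> ediam (d Y) (\<pi> Y X) < ereal \<xi>"
  using proj_system unfolding proj_system_def by auto

lemma obtain_point_in_space:
  assumes "W \<noteq> W'"
  obtains w where "w \<in> points S" "fst w = W"
proof -
  obtain s where "s \<in> \<pi> W W'" "s \<in> S W" using projection_props[of W' W] assms by auto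
  then show thesis using that[of "(W, s)"] unfolding points_def by simp
qed

lemma ppi_subset: "p \<in> points S \<Longrightarrow> ppi \<pi> W p \<subseteq> S W"
  using projection_props unfolding ppi_def points_def by auto

lemma ppi_nonempty: "ppi \<pi> W p \<noteq> {}"
  using projection_props unfolding ppi_def by auto

lemma ppi_small:
  assumes "p \<in> points S"
  shows "\<forall>u\<in>ppi \<pi> W p. \<forall>v\<in>ppi \<pi> W p. d W u v \<le> \<xi>"
proof (cases "fst p = W")
  case True
  then show ?thesis using assms xi_pos d_self unfolding ppi_def points_def by auto
next
  case False
  then have "ereal (d W u v) < ereal \<xi>" if "u \<in> \<pi> W (fst p)" "v \<in> \<pi> W (fst p)" for u v
    using ereal_le_ediam[OF that] projection_props[of "fst p" W] by (meson order_le_less_trans)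
  then show ?thesis using False unfolding ppi_def by fastforce
qed

lemma dist_le_dpi_pt:
  assumes p: "p \<in> points S" and q: "q \<in> points S"
    and "u \<in> ppi \<pi> W p \<union> ppi \<pi> W q" "v \<in> ppi \<pi> W p \<union> ppi \<pi> W q"
  shows "d W u v \<le> \<delta> W p q"
proof -
  obtain a b where a: "a \<in> ppi \<pi> W p" and b: "b \<in> ppi \<pi> W q" using ppi_nonempty by blast
  have "\<forall>u\<in>ppi \<pi> W p \<union> ppi \<pi> W q. \<forall>v\<in>ppi \<pi> W p \<union> ppi \<pi> W q. d W u v \<le> 2 * \<xi> + d W a b"
    by (rule Metric_space.dist_Un_bounded[OF metric_space ppi_subset[OF p] ppi_subset[OF q] a b
          ppi_small[OF p] ppi_small[OF q]])
  then show ?thesis unfolding dpi_pt_def by (rule dist_le_diam) (use assms(3,4) in auto)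
qed

lemma dpi_pt_le:
  assumes "\<And>u v. u \<in> ppi \<pi> W p \<union> ppi \<pi> W q \<Longrightarrow> v \<in> ppi \<pi> W p \<union> ppi \<pi> W q \<Longrightarrow> d W u v \<le> r"
  shows "\<delta> W p q \<le> r"
proof -
  obtain u where "u \<in> ppi \<pi> W p" using ppi_nonempty by blast
  then show ?thesis unfolding dpi_pt_def using assms by (intro diam_le[where a=u]) auto
qed

lemma dpi_pt_nonneg: "0 \<le> \<delta> W p q"
  unfolding dpi_pt_def by (rule diam_nonneg) (rule d_nonneg)

lemma dpi_pt_commute: "\<delta> W p q = \<delta> W q p"
  unfolding dpi_pt_def by (simp add: Un_commute)

lemma dpi_pt_triangle:
  assumes p: "p \<in> points S" and q: "q \<in> points S" and r: "r \<in> points S"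
  shows "\<delta> W p r \<le> \<delta> W p q + \<delta> W q r"
proof (rule dpi_pt_le)
  fix u v assume uv: "u \<in> ppi \<pi> W p \<union> ppi \<pi> W r" "v \<in> ppi \<pi> W p \<union> ppi \<pi> W r"
  obtain b where b: "b \<in> ppi \<pi> W q" using ppi_nonempty by blast
  have pq: "d W s t \<le> \<delta> W p q" if "s \<in> ppi \<pi> W p \<union> ppi \<pi> W q" "t \<in> ppi \<pi> W p \<union> ppi \<pi> W q" for s t
    using dist_le_dpi_pt[OF p q] that by blast
  have qr: "d W s t \<le> \<delta> W q r" if "s \<in> ppi \<pi> W q \<union> ppi \<pi> W r" "t \<in> ppi \<pi> W q \<union> ppi \<pi> W r" for s t
    using dist_le_dpi_pt[OF q r] that by blast
  have nonneg: "0 \<le> \<delta> W p q" "0 \<le> \<delta> W q r" by (rule dpi_pt_nonneg)+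
  have via_b: "d W s t \<le> \<delta> W p q + \<delta> W q r" if "s \<in> ppi \<pi> W p" "t \<in> ppi \<pi> W r" for s t
  proof -
    have "s \<in> S W" "t \<in> S W" "b \<in> S W" using that b ppi_subset p q r by blast+
    then have "d W s t \<le> d W s b + d W b t"
      using Metric_space.triangle[OF metric_space] by blast
    moreover have "d W s b \<le> \<delta> W p q" using pq that(1) b by blast
    moreover have "d W b t \<le> \<delta> W q r" using qr that(2) b by blast
    ultimately show ?thesis by linarith
  qed
  from uv show "d W u v \<le> \<delta> W p q + \<delta> W q r"
  proof (elim UnE)
    assume "u \<in> ppi \<pi> W p" "v \<in> ppi \<pi> W p"
    then show ?thesis using pq[of u v] nonneg by auto
  next
    assume "u \<in> ppi \<pi> W r" "v \<in> ppi \<pi> W r"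
    then show ?thesis using qr[of u v] nonneg by auto
  next
    assume "u \<in> ppi \<pi> W r" "v \<in> ppi \<pi> W p"
    moreover have "d W u v = d W v u" by (rule Metric_space.commute[OF metric_space])
    ultimately show ?thesis using via_b[of v u] by simp
  qed (rule via_b)
qed

lemma dpi_pt_same_space_less:
  assumes "fst p = fst q" "fst p \<noteq> W"
  shows "\<delta> W p q < \<xi>"
proof -
  have "ppi \<pi> W p \<union> ppi \<pi> W q = \<pi> W (fst p)" using assms unfolding ppi_def by auto
  moreover obtain u where "u \<in> \<pi> W (fst p)" using projection_props assms(2) by blast
  ultimately show ?thesis
    unfolding dpi_pt_def using projection_props assms(2) by (auto intro: diam_less)
qed

lemma dpi_pt_self_less:
  assumes "p \<in> points S"
  shows "\<delta> W p p < \<xi>"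
proof (cases "fst p = W")
  case True
  then have "\<delta> W p p \<le> 0"
    using assms d_self by (intro dpi_pt_le) (auto simp: ppi_def points_def)
  then show ?thesis using xi_pos by linarith
qed (simp add: dpi_pt_same_space_less)

lemma dpi_pt_behrstock_distinct_spaces:
  assumes "fst p \<noteq> fst a" "fst p \<noteq> fst b" "fst a \<noteq> fst b"
  shows "min (\<delta> (fst a) p b) (\<delta> (fst b) p a) < \<xi>"
proof -
  have "min (dpi d \<pi> (fst a) (fst p) (fst b)) (dpi d \<pi> (fst b) (fst p) (fst a)) < \<xi>"
    using proj_system assms unfolding proj_system_def by blast
  then show ?thesis using assms unfolding dpi_pt_def dpi_def ppi_def by auto
qed

lemma dpi_pt_behrstock:
  assumes "W \<noteq> W'" "fst w = W" "fst w' = W'" "\<xi> \<le> \<delta> W y w'"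
  shows "\<delta> W' y w < \<xi>"
proof -
  consider "fst y = W'" | "fst y = W" | "fst y \<noteq> W" "fst y \<noteq> W'" by blast
  then show ?thesis
  proof cases
    case 1
    then have "\<delta> W y w' < \<xi>" using assms by (intro dpi_pt_same_space_less) auto
    then show ?thesis using assms(4) by linarith
  next
    case 2
    then show ?thesis using assms by (intro dpi_pt_same_space_less) auto
  next
    case 3
    then show ?thesis using dpi_pt_behrstock_distinct_spaces[of y w w'] assms by auto
  qed
qed

lemma dY_pt_le_dpi_pt: "dY_pt d \<pi> \<xi> W p q \<le> \<delta> W p q"
proof (cases "fst p \<noteq> W \<and> fst q \<noteq> W")
  case True
  let ?A = "{dpi d \<pi> W X' Z' | X' Z'. (X', Z') \<in> Hset d \<pi> \<xi> (fst p) (fst q) \<and> X' \<noteq> W \<and> Z' \<noteq> W}"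
  have "dpi d \<pi> W (fst p) (fst q) \<in> ?A" using True unfolding Hset_def by blast
  moreover have "bdd_below ?A" unfolding bdd_below_def dpi_def
    by (rule exI[of _ 0]) (auto intro: diam_nonneg d_nonneg)
  ultimately have "dY d \<pi> \<xi> W (fst p) (fst q) \<le> dpi d \<pi> W (fst p) (fst q)"
    unfolding dY_def by (rule cInf_lower)
  then show ?thesis using True unfolding dY_pt_def dpi_pt_def dpi_def ppi_def by auto
qed (auto simp: dY_pt_def)

lemma finite_YK_pt:
  assumes "\<xi> \<le> K'"
  shows "finite (YK_pt d \<pi> \<xi> K' x z)"
proof -
  let ?B = "{Y. Y \<noteq> fst x \<and> Y \<noteq> fst z \<and> dpi d \<pi> Y (fst x) (fst z) \<ge> \<xi>}"
  have "Y \<in> ?B" if "Y \<in> YK_pt d \<pi> \<xi> K' x z" "Y \<noteq> fst x" "Y \<noteq> fst z" for Y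
  proof -
    have "K' < \<delta> Y x z" using that(1) dY_pt_le_dpi_pt[of Y x z] unfolding YK_pt_def by simp
    moreover have "\<delta> Y x z = dpi d \<pi> Y (fst x) (fst z)"
      using that unfolding dpi_pt_def dpi_def ppi_def by auto
    ultimately show ?thesis using that assms by auto
  qed
  then have "YK_pt d \<pi> \<xi> K' x z \<subseteq> {fst x, fst z} \<union> ?B" by blast
  moreover have "finite ?B" using proj_system unfolding proj_system_def by blast
  ultimately show ?thesis by (meson finite.emptyI finite.insertI finite_UnI finite_subset)
qed

text \<open>The two disjuncts are the orders \<open>x, W', W, z\<close> and \<open>x, W, W', z\<close>.\<close>

lemma large_projections_ordered:
  assumes WW': "W \<noteq> W'" and w: "w \<in> points S" "fst w = W" and w': "w' \<in> points S" "fst w' = W'"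
    and x: "x \<in> points S" and z: "z \<in> points S"
    and large: "2 * \<xi> \<le> \<delta> W x z" "2 * \<xi> \<le> \<delta> W' x z"
  shows "(\<delta> W x w' < \<xi> \<and> \<delta> W' w z < \<xi>) \<or> (\<delta> W' x w < \<xi> \<and> \<delta> W w' z < \<xi>)"
proof (cases "\<delta> W w' z < \<xi>")
  case True
  then have "\<xi> \<le> \<delta> W x w'" using dpi_pt_triangle[OF x w'(1) z, of W] large(1) by linarith
  then show ?thesis using True dpi_pt_behrstock[OF WW' w(2) w'(2)] by blast
next
  case False
  then have "\<xi> \<le> \<delta> W z w'" using dpi_pt_commute[of W z w'] by linarith
  then have "\<delta> W' z w < \<xi>" using dpi_pt_behrstock[OF WW' w(2) w'(2)] by blast
  then have "\<xi> \<le> \<delta> W' x w"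
    using dpi_pt_triangle[OF x w(1) z, of W'] large(2) dpi_pt_commute[of W' w z] by linarith
  then have "\<delta> W x w' < \<xi>" using dpi_pt_behrstock[OF WW'[symmetric] w'(2) w(2)] by blast
  then show ?thesis using \<open>\<delta> W' z w < \<xi>\<close> dpi_pt_commute[of W' w z] by auto
qed

text \<open>With \<open>W\<close> before \<open>W'\<close>, a point that has not yet passed \<open>W\<close> is near the start as seen from \<open>W'\<close>.\<close>

lemma not_past_first_near_start:
  assumes WW': "W \<noteq> W'" and w: "w \<in> points S" "fst w = W" and w': "w' \<in> points S" "fst w' = W'"
    and x: "x \<in> points S" and z: "z \<in> points S" and p: "p \<in> points S"
    and before: "\<delta> W' x w < \<xi>" "\<delta> W w' z < \<xi>"
    and far: "2 * \<xi> \<le> \<delta> W p z"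
  shows "\<delta> W' x p < 2 * \<xi>"
proof -
  have "\<xi> \<le> \<delta> W p w'" using dpi_pt_triangle[OF p w'(1) z, of W] before(2) far by linarith
  then have "\<delta> W' p w < \<xi>" using dpi_pt_behrstock[OF WW' w(2) w'(2)] by blast
  then show ?thesis
    using dpi_pt_triangle[OF x w(1) p, of W'] before(1) dpi_pt_commute[of W' w p] by linarith
qed

lemma ordered_pair_crossing_large:
  assumes WW': "W \<noteq> W'" and w: "w \<in> points S" "fst w = W" and w': "w' \<in> points S" "fst w' = W'"
    and x: "x \<in> points S" and z: "z \<in> points S" and p: "p \<in> points S" and q: "q \<in> points S"
    and before: "\<delta> W' x w < \<xi>" "\<delta> W w' z < \<xi>"
    and R: "2 * \<xi> \<le> R" and far: "R < \<delta> W p z" "R < \<delta> W' x q"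
  shows "R - 2 * \<xi> < \<delta> W p q \<and> R - 2 * \<xi> < \<delta> W' p q"
proof -
  have "\<delta> W' x p < 2 * \<xi>"
    using not_past_first_near_start[OF WW' w w' x z p before] far(1) R by linarith
  moreover have "\<delta> W z q < 2 * \<xi>"
    using not_past_first_near_start[OF WW'[symmetric] w' w z x q] before far(2) R dpi_pt_commute
    by (metis less_eq_real_def order.strict_trans1)
  ultimately show ?thesis
    using dpi_pt_triangle[OF x p q, of W'] dpi_pt_triangle[OF p q z, of W] far
      dpi_pt_commute[of W z q] by linarith
qed

end

locale projection_chain = projection_system S d \<pi> \<xi>
  for S :: "'y \<Rightarrow> 'a set" and d \<pi> \<xi> +
  fixes L :: real and P :: "nat \<Rightarrow> 'y \<times> 'a" and c :: "nat \<Rightarrow> real" and n :: nat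
  assumes chain_points: "i \<le> n \<Longrightarrow> P i \<in> points S"
    and dpi_pt_step_le: "i < n \<Longrightarrow> \<delta> W (P i) (P (Suc i)) \<le> c i"
    and step_within_or_edge: "i < n \<Longrightarrow> fst (P i) = fst (P (Suc i)) \<or> c i = L"
begin

lemma cost_nonneg: "i < n \<Longrightarrow> 0 \<le> c i"
  using dpi_pt_step_le dpi_pt_nonneg order.trans by blast

lemma dpi_pt_le_sum:
  assumes "a < b" "b \<le> n"
  shows "\<delta> W (P a) (P b) \<le> (\<Sum>k\<in>{a..<b}. c k)"
  using Suc_leI[OF assms(1)]
proof (induction b rule: dec_induct)
  case base
  then show ?case using dpi_pt_step_le assms by simp
next
  case (step m)
  then have "\<delta> W (P a) (P (Suc m)) \<le> \<delta> W (P a) (P m) + \<delta> W (P m) (P (Suc m))"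
    using chain_points assms by (intro dpi_pt_triangle) auto
  also have "\<dots> \<le> (\<Sum>k\<in>{a..<m}. c k) + c m" using step dpi_pt_step_le assms by (intro add_mono) auto
  also have "\<dots> = (\<Sum>k\<in>{a..<Suc m}. c k)" using step by simp
  finally show ?case .
qed

definition window :: "real \<Rightarrow> 'y \<Rightarrow> nat \<Rightarrow> nat \<Rightarrow> bool" where
  "window R W a b \<longleftrightarrow> a < b \<and> b \<le> n \<and> \<delta> W (P 0) (P a) \<le> R \<and> \<delta> W (P b) (P n) \<le> R \<and>
     (\<forall>i. a \<le> i \<and> i < b \<longrightarrow> R < \<delta> W (P 0) (P (Suc i)) \<and> R < \<delta> W (P i) (P n))"

lemma window_exists:
  assumes R: "\<xi> \<le> R" and large: "2 * R < \<delta> W (P 0) (P n)"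
  obtains a b where "window R W a b"
proof -
  define a where "a = (GREATEST i. i \<le> n \<and> \<delta> W (P 0) (P i) \<le> R)"
  have "0 \<le> n \<and> \<delta> W (P 0) (P 0) \<le> R"
    using dpi_pt_self_less[OF chain_points, of 0 W] R by simp
  then have a: "a \<le> n \<and> \<delta> W (P 0) (P a) \<le> R"
    unfolding a_def by (rule GreatestI_nat[where b=n]) simp
  have after_a: "R < \<delta> W (P 0) (P i)" if "a < i" "i \<le> n" for i
  proof (rule ccontr)
    assume "\<not> R < \<delta> W (P 0) (P i)"
    then have "i \<le> a" unfolding a_def using that(2) by (intro Greatest_le_nat[where b=n]) auto
    then show False using that(1) by simp
  qed
  define b where "b = (LEAST j. a \<le> j \<and> j \<le> n \<and> \<delta> W (P j) (P n) \<le> R)"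
  have "a \<le> n \<and> n \<le> n \<and> \<delta> W (P n) (P n) \<le> R"
    using a dpi_pt_self_less[OF chain_points, of n W] R by simp
  then have b: "a \<le> b \<and> b \<le> n \<and> \<delta> W (P b) (P n) \<le> R"
    unfolding b_def by (rule LeastI)
  have before_b: "R < \<delta> W (P j) (P n)" if "a \<le> j" "j < b" for j
    using not_less_Least[of j] that b unfolding b_def by fastforce
  have "a \<noteq> b"
  proof
    assume "a = b"
    then have "\<delta> W (P 0) (P n) \<le> 2 * R"
      using dpi_pt_triangle[of "P 0" "P a" "P n" W] chain_points a b by fastforce
    then show False using large by linarith
  qed
  then have "window R W a b"
    unfolding window_def using a b after_a before_b by auto
  then show thesis by (rule that)
qed

lemma window_cost:
  assumes "window R W a b"
  shows "\<delta> W (P 0) (P n) \<le> 2 * R + (\<Sum>k\<in>{a..<b}. c k)"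
proof -
  have "a < b" "b \<le> n" and ends: "\<delta> W (P 0) (P a) \<le> R" "\<delta> W (P b) (P n) \<le> R"
    using assms unfolding window_def by auto
  then have "\<delta> W (P 0) (P n) \<le> \<delta> W (P 0) (P a) + \<delta> W (P a) (P b) + \<delta> W (P b) (P n)"
    using dpi_pt_triangle[of "P 0" "P a" "P n" W] dpi_pt_triangle[of "P a" "P b" "P n" W] chain_points
    by fastforce
  then show ?thesis using dpi_pt_le_sum[OF \<open>a < b\<close> \<open>b \<le> n\<close>, of W] ends by linarith
qed

lemma windows_disjoint:
  assumes WW': "W \<noteq> W'" and win: "window R W a b" "window R W' a' b'"
    and R: "\<bar>L\<bar> + 4 * \<xi> \<le> R"
    and large: "2 * \<xi> \<le> \<delta> W (P 0) (P n)" "2 * \<xi> \<le> \<delta> W' (P 0) (P n)"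
  shows "{a..<b} \<inter> {a'..<b'} = {}"
proof (rule ccontr)
  assume "{a..<b} \<inter> {a'..<b'} \<noteq> {}"
  then obtain i where "i \<in> {a..<b}" "i \<in> {a'..<b'}" by blast
  then have i: "a \<le> i" "i < b" "a' \<le> i" "i < b'" by auto
  then have "i < n" using win unfolding window_def by auto
  let ?x = "P 0" and ?z = "P n" and ?p = "P i" and ?q = "P (Suc i)"
  have pts: "?x \<in> points S" "?z \<in> points S" "?p \<in> points S" "?q \<in> points S"
    using chain_points \<open>i < n\<close> by auto
  have far: "R < \<delta> W ?p ?z" "R < \<delta> W' ?p ?z" "R < \<delta> W ?x ?q" "R < \<delta> W' ?x ?q"
    using win i unfolding window_def by auto
  obtain w where w: "w \<in> points S" "fst w = W" using obtain_point_in_space[OF WW'] .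
  obtain w' where w': "w' \<in> points S" "fst w' = W'" using obtain_point_in_space[OF WW'[symmetric]] .
  have "2 * \<xi> \<le> R" using R xi_pos abs_ge_zero[of L] by linarith
  have crossing: "R - 2 * \<xi> < \<delta> W ?p ?q \<and> R - 2 * \<xi> < \<delta> W' ?p ?q"
    using large_projections_ordered[OF WW' w w' pts(1,2) large]
  proof
    assume "\<delta> W ?x w' < \<xi> \<and> \<delta> W' w ?z < \<xi>"
    then show ?thesis
      using ordered_pair_crossing_large[OF WW'[symmetric] w' w pts _ _ \<open>2 * \<xi> \<le> R\<close> far(2,3)] by auto
  next
    assume "\<delta> W' ?x w < \<xi> \<and> \<delta> W w' ?z < \<xi>"
    then show ?thesis
      using ordered_pair_crossing_large[OF WW' w w' pts _ _ \<open>2 * \<xi> \<le> R\<close> far(1,4)] by auto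
  qed
  from step_within_or_edge[OF \<open>i < n\<close>] show False
  proof
    assume "fst ?p = fst ?q"
    then have "\<delta> W ?p ?q < \<xi> \<or> \<delta> W' ?p ?q < \<xi>"
      using WW' by (cases "fst ?p = W") (auto intro: dpi_pt_same_space_less)
    then show False by (elim disjE) (use crossing R abs_ge_zero[of L] xi_pos in linarith)+
  next
    assume "c i = L"
    then have "\<delta> W ?p ?q \<le> \<bar>L\<bar>" using dpi_pt_step_le[OF \<open>i < n\<close>, of W] by linarith
    then show False using crossing R xi_pos by linarith
  qed
qed

lemma sum_dY_pt_le_chain_cost:
  assumes R: "\<bar>L\<bar> + 4 * \<xi> \<le> R" and K': "4 * R + \<xi> \<le> K'"
  shows "(\<Sum>W\<in>YK_pt d \<pi> \<xi> K' (P 0) (P n). dY_pt d \<pi> \<xi> W (P 0) (P n)) \<le> 2 * (\<Sum>i<n. c i)"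
proof -
  let ?F = "YK_pt d \<pi> \<xi> K' (P 0) (P n)"
  have "\<xi> \<le> R" using R xi_pos abs_ge_zero[of L] by linarith
  have large: "K' < \<delta> W (P 0) (P n)" if "W \<in> ?F" for W
    using that dY_pt_le_dpi_pt[of W "P 0" "P n"] unfolding YK_pt_def by simp
  have "\<exists>a b. window R W a b" if "W \<in> ?F" for W
  proof -
    have "2 * R < \<delta> W (P 0) (P n)" using large[OF that] K' \<open>\<xi> \<le> R\<close> xi_pos by linarith
    then show ?thesis using window_exists[OF \<open>\<xi> \<le> R\<close>] by blast
  qed
  then obtain a b where win: "\<And>W. W \<in> ?F \<Longrightarrow> window R W (a W) (b W)" by metis
  have per_window: "dY_pt d \<pi> \<xi> W (P 0) (P n) \<le> 2 * (\<Sum>k\<in>{a W..<b W}. c k)" if "W \<in> ?F" for W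
    using dY_pt_le_dpi_pt[of W "P 0" "P n"] window_cost[OF win[OF that]] large[OF that] K' xi_pos
    by linarith
  have "{a W..<b W} \<inter> {a W'..<b W'} = {}" if "W \<in> ?F" "W' \<in> ?F" "W \<noteq> W'" for W W'
    by (rule windows_disjoint[OF that(3) win[OF that(1)] win[OF that(2)] R])
      (use large[OF that(1)] large[OF that(2)] K' \<open>\<xi> \<le> R\<close> xi_pos in linarith)+
  then have "disjoint_family_on (\<lambda>W. {a W..<b W}) ?F"
    unfolding disjoint_family_on_def by blast
  have stretches_le: "(\<Sum>W\<in>?F. \<Sum>k\<in>{a W..<b W}. c k) \<le> (\<Sum>i<n. c i)"
  proof (rule sum_disjoint_family_le[OF finite_YK_pt finite_lessThan _ \<open>disjoint_family_on _ ?F\<close>])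
    show "\<xi> \<le> K'" using K' \<open>\<xi> \<le> R\<close> xi_pos by linarith
    show "{a W..<b W} \<subseteq> {..<n}" if "W \<in> ?F" for W using win[OF that] unfolding window_def by auto
  qed (rule cost_nonneg, simp)
  have "(\<Sum>W\<in>?F. dY_pt d \<pi> \<xi> W (P 0) (P n)) \<le> (\<Sum>W\<in>?F. 2 * (\<Sum>k\<in>{a W..<b W}. c k))"
    by (rule sum_mono) (rule per_window)
  also have "\<dots> = 2 * (\<Sum>W\<in>?F. \<Sum>k\<in>{a W..<b W}. c k)" by (simp add: sum_distrib_left)
  also have "\<dots> \<le> 2 * (\<Sum>i<n. c i)" using stretches_le by simp
  finally show ?thesis .
qed

end

context projection_system
begin

lemma gstep_points:
  assumes "gstep S d \<pi> \<xi> K L p q c"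
  shows "p \<in> points S" "q \<in> points S"
  using assms projection_props[of "fst q" "fst p"] projection_props[of "fst p" "fst q"]
  unfolding gstep_def PK_adj_def points_def by auto

lemma glued_dist_le_gstep:
  assumes "gstep S d \<pi> \<xi> K L p q c"
  shows "glued_dist S d \<pi> \<xi> K L p q \<le> ereal c"
proof -
  have "ereal (sum_list [c]) \<in> {ereal (sum_list cs) | ps cs.
      ps \<noteq> [] \<and> hd ps = p \<and> last ps = q \<and> length cs = length ps - 1 \<and>
      (\<forall>i < length cs. gstep S d \<pi> \<xi> K L (ps ! i) (ps ! Suc i) (cs ! i))}"
    using assms by (intro CollectI exI[of _ "[p, q]"] exI[of _ "[c]"]) auto
  then show ?thesis unfolding glued_dist_def by (simp add: Inf_lower)
qed

lemma half_sum_dY_pt_le_glued_dist: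
  assumes lower: "\<forall>Y. \<forall>x\<in>points S. \<forall>z\<in>points S. ereal (\<delta> Y x z) \<le> glued_dist S d \<pi> \<xi> K L x z"
    and R: "\<bar>L\<bar> + 4 * \<xi> \<le> R" and K': "4 * R + \<xi> \<le> K'"
    and z: "z \<in> points S"
  shows "ereal (1/2 * (\<Sum>W\<in>YK_pt d \<pi> \<xi> K' x z. dY_pt d \<pi> \<xi> W x z)) \<le> glued_dist S d \<pi> \<xi> K L x z"
  unfolding glued_dist_def
proof (rule Inf_greatest)
  fix e assume "e \<in> {ereal (sum_list cs) | ps cs.
      ps \<noteq> [] \<and> hd ps = x \<and> last ps = z \<and> length cs = length ps - 1 \<and>
      (\<forall>i < length cs. gstep S d \<pi> \<xi> K L (ps ! i) (ps ! Suc i) (cs ! i))}"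
  then obtain ps cs where e: "e = ereal (sum_list cs)"
    and ps: "ps \<noteq> []" "hd ps = x" "last ps = z" "length cs = length ps - 1"
    and steps: "\<forall>i < length cs. gstep S d \<pi> \<xi> K L (ps ! i) (ps ! Suc i) (cs ! i)"
    by blast
  have ends: "ps ! 0 = x" "ps ! length cs = z"
    using ps by (auto simp: hd_conv_nth last_conv_nth)
  interpret projection_chain S d \<pi> \<xi> L "nth ps" "nth cs" "length cs"
  proof
    show "ps ! i \<in> points S" if "i \<le> length cs" for i
    proof (cases "i = length cs")
      case False
      then show ?thesis using gstep_points(1) steps that by (meson le_neq_implies_less)
    qed (use z ends in simp)
    show "\<delta> W (ps ! i) (ps ! Suc i) \<le> cs ! i" if "i < length cs" for i W
    proof -
      have "ereal (\<delta> W (ps ! i) (ps ! Suc i)) \<le> glued_dist S d \<pi> \<xi> K L (ps ! i) (ps ! Suc i)"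
        using lower gstep_points steps that by blast
      also have "\<dots> \<le> ereal (cs ! i)" using glued_dist_le_gstep steps that by blast
      finally show ?thesis by simp
    qed
    show "fst (ps ! i) = fst (ps ! Suc i) \<or> cs ! i = L" if "i < length cs" for i
      using steps that unfolding gstep_def by blast
  qed
  have "(\<Sum>W\<in>YK_pt d \<pi> \<xi> K' x z. dY_pt d \<pi> \<xi> W x z) \<le> 2 * sum_list cs"
    using sum_dY_pt_le_chain_cost[OF R K'] ends by (simp add: sum_list_sum_nth atLeast0LessThan)
  then show "ereal (1/2 * (\<Sum>W\<in>YK_pt d \<pi> \<xi> K' x z. dY_pt d \<pi> \<xi> W x z)) \<le> e"
    unfolding e by simp
qed

end

theorem corollary3p12:
  fixes S :: "'y \<Rightarrow> 'a set" and d :: "'y \<Rightarrow> 'a \<Rightarrow> 'a \<Rightarrow> real"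
    and \<pi> :: "'y \<Rightarrow> 'y \<Rightarrow> 'a set" and \<xi> :: real and c :: real
  assumes "proj_system S d \<pi> \<xi>"
  shows "\<exists>K0. \<forall>K \<ge> K0. \<forall>L.
           \<bar>L - K\<bar> \<le> c \<and>
           (\<forall>Y. \<forall>x\<in>points S. \<forall>z\<in>points S. glued_dist S d \<pi> \<xi> K L x z \<ge> ereal (dpi_pt d \<pi> Y x z))
           \<longrightarrow> (\<exists>K' > K. \<forall>x\<in>points S. \<forall>z\<in>points S.
                  finite (YK_pt d \<pi> \<xi> K' x z) \<and>
                  glued_dist S d \<pi> \<xi> K L x z \<ge>
                    ereal (1/2 * (\<Sum>W\<in>YK_pt d \<pi> \<xi> K' x z. dY_pt d \<pi> \<xi> W x z)))"
proof -
  interpret projection_system S d \<pi> \<xi> by unfold_locales (rule assms)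
  show ?thesis
  proof (rule exI[of _ 0], intro allI impI)
    fix K L :: real
    assume "0 \<le> K" and hyp: "\<bar>L - K\<bar> \<le> c \<and>
      (\<forall>Y. \<forall>x\<in>points S. \<forall>z\<in>points S. glued_dist S d \<pi> \<xi> K L x z \<ge> ereal (\<delta> Y x z))"
    define R where "R = \<bar>L\<bar> + 4 * \<xi>"
    define K' where "K' = K + 4 * R + \<xi>"
    have "K < K'" "\<xi> \<le> K'" "4 * R + \<xi> \<le> K'"
      using K'_def R_def \<open>0 \<le> K\<close> xi_pos abs_ge_zero[of L] by linarith+
    then show "\<exists>K' > K. \<forall>x\<in>points S. \<forall>z\<in>points S. finite (YK_pt d \<pi> \<xi> K' x z) \<and>
        glued_dist S d \<pi> \<xi> K L x z \<ge> ereal (1/2 * (\<Sum>W\<in>YK_pt d \<pi> \<xi> K' x z. dY_pt d \<pi> \<xi> W x z))"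
      using finite_YK_pt half_sum_dY_pt_le_glued_dist[of K L R K'] hyp R_def by auto
  qed
qed

end
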